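(* Let $(Y,G)$ and $(X,G)$ be compact metrizable dynamical systems and $\pi:Y\to X$ a factor map (continuous, surjective, $G$-equivariant) which is finite-to-one and a local homeomorphism (every point of $Y$ has a neighborhood on which $\pi$ restricts to a homeomorphism onto its image). Suppose $X$ is connected and $G$ is a compactly generated locally compact abelian group, i.e. there is a compact neighborhood $K$ of $0$ in $G$ with $G=\bigcup_{n\in\mathbb N}nK$, where $nK=K+\dots+K$ ($n$ summands). If $(X,G)$ is equicontinuous, then $(Y,G)$ is equicontinuous.
   Context: A system $(Z,G)$ with $Z$ a compact metric space and $G$ acting continuously is equicontinuous if the family of homeomorphisms $\{z\mapsto t\cdot z\}_{t\in G}$ is equicontinuous at every point of $Z$. *)

theory Defs
  imports "HOL-Analysis.Analysis"
begin

definition continuous_group_action :: "('g::{topological_space,ab_group_add} \<Rightarrow> 'z::topological_space \<Rightarrow> 'z) \<Rightarrow> bool" where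
  "continuous_group_action act \<longleftrightarrow>
     (\<forall>z. act 0 z = z) \<and> (\<forall>s t z. act (s + t) z = act s (act t z)) \<and>
     continuous_on UNIV (\<lambda>p. act (fst p) (snd p))"

definition equicontinuous_system :: "('g \<Rightarrow> 'z::metric_space \<Rightarrow> 'z) \<Rightarrow> bool" where
  "equicontinuous_system act \<longleftrightarrow>
     (\<forall>z. \<forall>e>0. \<exists>d>0. \<forall>z'. dist z z' < d \<longrightarrow> (\<forall>t. dist (act t z) (act t z') < e))"

definition topological_ab_group :: "'g::{topological_space,ab_group_add} itself \<Rightarrow> bool" where
  "topological_ab_group _ \<longleftrightarrow>
     continuous_on (UNIV :: ('g \<times> 'g) set) (\<lambda>p. fst p + snd p) \<and>
     continuous_on (UNIV :: 'g set) uminus"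

fun nfold_sum :: "nat \<Rightarrow> 'g::ab_group_add set \<Rightarrow> 'g set" where
  "nfold_sum 0 K = {0}"
| "nfold_sum (Suc n) K = {a + b | a b. a \<in> K \<and> b \<in> nfold_sum n K}"

definition compactly_generated :: "'g::{topological_space,ab_group_add} itself \<Rightarrow> bool" where
  "compactly_generated _ \<longleftrightarrow>
     (\<exists>K :: 'g set. compact K \<and> 0 \<in> interior K \<and> (\<Union>n. nfold_sum n K) = UNIV)"

definition local_homeomorphism :: "('a::topological_space \<Rightarrow> 'b::topological_space) \<Rightarrow> bool" where
  "local_homeomorphism f \<longleftrightarrow>
     (\<forall>y. \<exists>U g. open U \<and> y \<in> U \<and> homeomorphism U (f ` U) f g)"

end

theory Submission
  imports "HOL-Analysis.Analysis" Defs
begin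

(* Let \<pi> : Y \<rightarrow> X be the factor map, with Y compact.
   (1) Since \<pi> is locally injective and Y is compact, a Lebesgue number of a cover by
       open sets of injectivity gives \<eta> > 0 such that distinct points of one fibre are
       at least \<eta> apart.
   (2) By compactness again, two points of Y that are at most \<eta>/2 apart and whose images
       are very close must themselves be close ("closeness lifts from X to Y").
   (3) For the compact generating set K of G, the maps z \<mapsto> k.z (k \<in> K) are uniformly
       equicontinuous, so a \<delta> > 0 keeps k.y, k.y' within \<eta>/2 for all k \<in> K.
   (4) Let y, y' be close.  Equicontinuity of X keeps \<pi>(t.y), \<pi>(t.y') close for all t.
       By induction on n, for t \<in> nK the points t.y, t.y' stay close: one more step by an
       element of K moves them at most \<eta>/2 apart by (3), and (2) then pulls them back
       to small distance.  Since G is the union of the sets nK, this is equicontinuity. *)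

lemma fibres_uniformly_separated:
  fixes \<pi> :: "'y::metric_space \<Rightarrow> 'x::topological_space"
  assumes "compact (UNIV :: 'y set)" and "local_homeomorphism \<pi>"
  obtains \<eta> where "\<eta> > 0" "\<And>a b. \<pi> a = \<pi> b \<Longrightarrow> dist a b < \<eta> \<Longrightarrow> a = b"
proof -
  define \<G> where "\<G> = {U. open U \<and> inj_on \<pi> U}"
  have cover: "UNIV \<subseteq> \<Union>\<G>"
  proof
    fix y :: 'y
    obtain U g where "open U" "y \<in> U" "homeomorphism U (\<pi> ` U) \<pi> g"
      using assms(2) unfolding local_homeomorphism_def by blast
    then have "inj_on \<pi> U"
      by (metis homeomorphism_apply1 inj_on_inverseI)
    with \<open>open U\<close> \<open>y \<in> U\<close> show "y \<in> \<Union>\<G>" unfolding \<G>_def by blast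
  qed
  have open_\<G>: "open U" if "U \<in> \<G>" for U using that unfolding \<G>_def by blast
  obtain \<eta> where "\<eta> > 0" and lebesgue: "\<And>y. y \<in> UNIV \<Longrightarrow> \<exists>U\<in>\<G>. ball y \<eta> \<subseteq> U"
    using Heine_Borel_lemma[OF assms(1) cover open_\<G>] by blast
  have "a = b" if "\<pi> a = \<pi> b" "dist a b < \<eta>" for a b
  proof -
    obtain U where "U \<in> \<G>" and "ball a \<eta> \<subseteq> U" using lebesgue[OF UNIV_I] by blast
    then have "inj_on \<pi> U" unfolding \<G>_def by blast
    moreover have "a \<in> U" "b \<in> U"
      using \<open>ball a \<eta> \<subseteq> U\<close> \<open>\<eta> > 0\<close> that(2) by auto
    ultimately show "a = b" using that(1) by (simp add: inj_on_eq_iff)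
  qed
  with \<open>\<eta> > 0\<close> show ?thesis using that by blast
qed

text \<open>The pairs at distance
  between e and \<eta>/2 form a compact set on which the distance of the images is
  positive, so it has a positive minimum \<rho>.\<close>

lemma closeness_lifts:
  fixes \<pi> :: "'y::metric_space \<Rightarrow> 'x::metric_space"
  assumes "compact (UNIV :: 'y set)" and "continuous_on UNIV \<pi>"
    and sep: "\<And>a b. \<pi> a = \<pi> b \<Longrightarrow> dist a b < \<eta> \<Longrightarrow> a = b"
    and "e > 0"
  obtains \<rho> where "\<rho> > 0"
    "\<And>a b. dist a b \<le> \<eta>/2 \<Longrightarrow> dist (\<pi> a) (\<pi> b) < \<rho> \<Longrightarrow> dist a b < e"
proof -
  define S where "S = {p :: 'y \<times> 'y. e \<le> dist (fst p) (snd p) \<and> dist (fst p) (snd p) \<le> \<eta>/2}"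
  define \<Delta> where "\<Delta> = (\<lambda>p :: 'y \<times> 'y. dist (\<pi> (fst p)) (\<pi> (snd p)))"
  have cont_\<Delta>: "continuous_on UNIV \<Delta>"
    unfolding \<Delta>_def by (intro continuous_intros continuous_on_compose2[OF assms(2)]) auto
  have "closed S"
    unfolding S_def by (intro closed_Collect_conj closed_Collect_le continuous_intros)
  then have "compact S"
    using compact_Int_closed[OF compact_Times[OF assms(1) assms(1)]] by simp
  have \<Delta>_pos: "\<Delta> p > 0" if "p \<in> S" for p
  proof -
    have "fst p \<noteq> snd p" "dist (fst p) (snd p) < \<eta>"
      using that \<open>e > 0\<close> unfolding S_def by auto
    then show ?thesis using sep unfolding \<Delta>_def by fastforce
  qed
  show ?thesis
  proof (cases "S = {}")
    case True
    show ?thesis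
    proof (rule that[of 1])
      fix a b :: 'y assume "dist a b \<le> \<eta>/2"
      moreover have "(a, b) \<notin> S" using True by blast
      ultimately show "dist a b < e" unfolding S_def by auto
    qed simp
  next
    case False
    then obtain p0 where "p0 \<in> S" and min: "\<And>p. p \<in> S \<Longrightarrow> \<Delta> p0 \<le> \<Delta> p"
      using continuous_attains_inf[OF \<open>compact S\<close> _ continuous_on_subset[OF cont_\<Delta>]] by blast
    show ?thesis
    proof (rule that[of "\<Delta> p0"])
      show "\<Delta> p0 > 0" using \<Delta>_pos[OF \<open>p0 \<in> S\<close>] .
      fix a b :: 'y assume "dist a b \<le> \<eta>/2" "dist (\<pi> a) (\<pi> b) < \<Delta> p0"
      then show "dist a b < e"
        using min[of "(a, b)"] unfolding S_def \<Delta>_def by force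
    qed
  qed
qed

lemma compact_times_uniformly_equicontinuous:
  fixes act :: "'g::topological_space \<Rightarrow> 'y::metric_space \<Rightarrow> 'y"
  assumes "compact (UNIV :: 'y set)" and "compact K"
    and cont: "continuous_on UNIV (\<lambda>p. act (fst p) (snd p))"
    and "e > 0"
  obtains \<delta> where "\<delta> > 0" "\<And>a b k. dist a b < \<delta> \<Longrightarrow> k \<in> K \<Longrightarrow> dist (act k a) (act k b) < e"
proof -
  have "continuous_on (UNIV \<times> K) (\<lambda>p. (\<lambda>q. act (fst q) (snd q)) (snd p, fst p))"
    by (rule continuous_on_compose2[OF cont]) (intro continuous_intros, simp)
  then have cont': "continuous_on (UNIV \<times> K) (\<lambda>p. act (snd p) (fst p))" by simp
  have pointwise: "\<exists>\<delta>>0. \<forall>f\<in>(\<lambda>k. act k) ` K. \<forall>b\<in>UNIV. dist b a < \<delta> \<longrightarrow> dist (f b) (f a) < \<epsilon>"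
    if "a \<in> UNIV" "\<epsilon> > 0" for a \<epsilon>
  proof -
    obtain V where "a \<in> V" "open V" and V_raw: "\<forall>b\<in>V \<inter> UNIV. \<forall>k\<in>K.
        dist (act (snd (b, k)) (fst (b, k))) (act (snd (a, k)) (fst (a, k))) \<le> \<epsilon>/2"
      by (rule continuous_on_prod_compactE[OF cont' \<open>compact K\<close> UNIV_I half_gt_zero[OF \<open>\<epsilon> > 0\<close>]])
    then have V: "\<forall>b\<in>V. \<forall>k\<in>K. dist (act k b) (act k a) \<le> \<epsilon>/2" by simp
    obtain \<delta> where "\<delta> > 0" "ball a \<delta> \<subseteq> V" using openE[OF \<open>open V\<close> \<open>a \<in> V\<close>] .
    have "dist (act k b) (act k a) < \<epsilon>" if "dist b a < \<delta>" "k \<in> K" for b k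
    proof -
      have "b \<in> V" using \<open>ball a \<delta> \<subseteq> V\<close> that(1) by (auto simp: dist_commute)
      then have "dist (act k b) (act k a) \<le> \<epsilon>/2" using V that(2) by blast
      then show ?thesis using \<open>\<epsilon> > 0\<close> by linarith
    qed
    then show ?thesis using \<open>\<delta> > 0\<close> by blast
  qed
  obtain \<delta> where "\<delta> > 0"
    and unif: "\<And>f a b. f \<in> (\<lambda>k. act k) ` K \<Longrightarrow> a \<in> UNIV \<Longrightarrow> b \<in> UNIV \<Longrightarrow> dist b a < \<delta> \<Longrightarrow> dist (f b) (f a) < e"
    using compact_uniformly_equicontinuous[OF assms(1) pointwise \<open>e > 0\<close>] by blast
  show ?thesis
  proof (rule that[OF \<open>\<delta> > 0\<close>])
    fix a b :: 'y and k assume "dist a b < \<delta>" "k \<in> K"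
    then show "dist (act k a) (act k b) < e"
      using unif[OF imageI[OF \<open>k \<in> K\<close>] UNIV_I UNIV_I, of b a] by (simp add: dist_commute)
  qed
qed

lemma closeness_persists_on_nfold_sums:
  fixes act :: "'g::ab_group_add \<Rightarrow> 'y::metric_space \<Rightarrow> 'y"
  assumes act_zero: "\<And>z. act 0 z = z"
    and act_add: "\<And>s t z. act (s + t) z = act s (act t z)"
    and step: "\<And>a b k. dist a b < \<delta> \<Longrightarrow> k \<in> K \<Longrightarrow> dist (act k a) (act k b) < \<eta>"
    and improve: "\<And>t. dist (act t y) (act t y') < \<eta> \<Longrightarrow> dist (act t y) (act t y') < \<epsilon>"
    and "\<epsilon> \<le> \<delta>" and "dist y y' < \<epsilon>"
  shows "t \<in> nfold_sum n K \<Longrightarrow> dist (act t y) (act t y') < \<epsilon>"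
proof (induction n arbitrary: t)
  case 0
  then show ?case using \<open>dist y y' < \<epsilon>\<close> act_zero by simp
next
  case (Suc n)
  then obtain k s where "t = k + s" "k \<in> K" "s \<in> nfold_sum n K" by auto
  with Suc.IH have "dist (act s y) (act s y') < \<delta>" using \<open>\<epsilon> \<le> \<delta>\<close> by fastforce
  then have "dist (act k (act s y)) (act k (act s y')) < \<eta>" using step \<open>k \<in> K\<close> by blast
  then have "dist (act t y) (act t y') < \<eta>" using \<open>t = k + s\<close> act_add by simp
  then show ?case using improve by blast
qed

lemma equicontinuity_lifts:
  fixes actY :: "'g::ab_group_add \<Rightarrow> 'y::metric_space \<Rightarrow> 'y"
    and actX :: "'g \<Rightarrow> 'x::metric_space \<Rightarrow> 'x"
    and \<pi> :: "'y \<Rightarrow> 'x"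
  assumes "compact (UNIV :: 'y set)" and \<pi>_cont: "continuous_on UNIV \<pi>"
    and equivariant: "\<And>t y. \<pi> (actY t y) = actX t (\<pi> y)"
    and "equicontinuous_system actX"
    and act_zero: "\<And>z. actY 0 z = z"
    and act_add: "\<And>s t z. actY (s + t) z = actY s (actY t z)"
    and K_generates: "(\<Union>n. nfold_sum n K) = UNIV"
    and sep: "\<And>a b. \<pi> a = \<pi> b \<Longrightarrow> dist a b < \<eta> \<Longrightarrow> a = b"
    and "\<delta> > 0"
    and K_step: "\<And>a b k. dist a b < \<delta> \<Longrightarrow> k \<in> K \<Longrightarrow> dist (actY k a) (actY k b) < \<eta>/2"
  shows "equicontinuous_system actY"
  unfolding equicontinuous_system_def
proof (intro allI impI)
  fix y and \<epsilon> :: real assume "\<epsilon> > 0"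
  define \<epsilon>' where "\<epsilon>' = min \<epsilon> \<delta>"
  have "\<epsilon>' > 0" using \<open>\<epsilon> > 0\<close> \<open>\<delta> > 0\<close> unfolding \<epsilon>'_def by simp
  obtain \<rho> where "\<rho> > 0" and lift: "\<And>a b. dist a b \<le> \<eta>/2 \<Longrightarrow> dist (\<pi> a) (\<pi> b) < \<rho> \<Longrightarrow> dist a b < \<epsilon>'"
    using closeness_lifts[OF assms(1) \<pi>_cont sep \<open>\<epsilon>' > 0\<close>] by blast
  obtain \<sigma> where "\<sigma> > 0" and X_equi: "\<And>x'. dist (\<pi> y) x' < \<sigma> \<Longrightarrow> dist (actX t (\<pi> y)) (actX t x') < \<rho>" for t
    using \<open>equicontinuous_system actX\<close> \<open>\<rho> > 0\<close> unfolding equicontinuous_system_def by metis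
  obtain \<tau> where "\<tau> > 0" and \<pi>_at_y: "\<And>y'. dist y' y < \<tau> \<Longrightarrow> dist (\<pi> y') (\<pi> y) < \<sigma>"
    using \<pi>_cont \<open>\<sigma> > 0\<close> unfolding continuous_on_iff by blast
  have "\<forall>y'. dist y y' < min \<epsilon>' \<tau> \<longrightarrow> (\<forall>t. dist (actY t y) (actY t y') < \<epsilon>)"
  proof (intro allI impI)
    fix y' t assume close: "dist y y' < min \<epsilon>' \<tau>"
    then have "dist (\<pi> (actY s y)) (\<pi> (actY s y')) < \<rho>" for s
      using X_equi \<pi>_at_y equivariant by (simp add: dist_commute)
    then have improve: "dist (actY s y) (actY s y') < \<eta>/2 \<Longrightarrow> dist (actY s y) (actY s y') < \<epsilon>'" for s
      using lift by simp
    obtain n where "t \<in> nfold_sum n K" using K_generates by blast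
    then have "dist (actY t y) (actY t y') < \<epsilon>'"
      using closeness_persists_on_nfold_sums[OF act_zero act_add K_step improve] close
      unfolding \<epsilon>'_def by simp
    then show "dist (actY t y) (actY t y') < \<epsilon>" unfolding \<epsilon>'_def by simp
  qed
  then show "\<exists>d>0. \<forall>y'. dist y y' < d \<longrightarrow> (\<forall>t. dist (actY t y) (actY t y') < \<epsilon>)"
    using \<open>\<epsilon>' > 0\<close> \<open>\<tau> > 0\<close> by (metis min_less_iff_conj)
qed

theorem mainTheorem4:
  fixes actY :: "'g::{t2_space,ab_group_add} \<Rightarrow> 'y::metric_space \<Rightarrow> 'y"
    and actX :: "'g \<Rightarrow> 'x::metric_space \<Rightarrow> 'x"
    and \<pi> :: "'y \<Rightarrow> 'x"
  assumes "topological_ab_group TYPE('g)"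
    and "locally_compact_space (euclidean :: 'g topology)"
    and "compactly_generated TYPE('g)"
    and "compact (UNIV :: 'y set)"
    and "compact (UNIV :: 'x set)"
    and "continuous_group_action actY"
    and "continuous_group_action actX"
    and "continuous_on UNIV \<pi>"
    and "surj \<pi>"
    and "\<And>t y. \<pi> (actY t y) = actX t (\<pi> y)"
    and "\<And>x. finite (\<pi> -` {x})"
    and "local_homeomorphism \<pi>"
    and "connected (UNIV :: 'x set)"
    and "equicontinuous_system actX"
  shows "equicontinuous_system actY"
proof -
  obtain K :: "'g set" where "compact K" and K_generates: "(\<Union>n. nfold_sum n K) = UNIV"
    using assms(3) unfolding compactly_generated_def by blast
  have act_zero: "\<And>z. actY 0 z = z" and act_add: "\<And>s t z. actY (s + t) z = actY s (actY t z)"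
    and act_cont: "continuous_on UNIV (\<lambda>p. actY (fst p) (snd p))"
    using assms(6) unfolding continuous_group_action_def by auto
  obtain \<eta> where "\<eta> > 0" and sep: "\<And>a b. \<pi> a = \<pi> b \<Longrightarrow> dist a b < \<eta> \<Longrightarrow> a = b"
    using fibres_uniformly_separated[OF assms(4,12)] by blast
  obtain \<delta> where "\<delta> > 0"
    and K_step: "\<And>a b k. dist a b < \<delta> \<Longrightarrow> k \<in> K \<Longrightarrow> dist (actY k a) (actY k b) < \<eta>/2"
    using compact_times_uniformly_equicontinuous[OF assms(4) \<open>compact K\<close> act_cont, of "\<eta>/2"] \<open>\<eta> > 0\<close>
    by auto
  show ?thesis
    using equicontinuity_lifts[OF assms(4,8,10,14) act_zero act_add K_generates sep \<open>\<delta> > 0\<close> K_step] .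
qed

end
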